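(* Let $0<\eta<\eta'<1/4$, $\lambda=\mathrm{e}^{-1}+\eta$, $\ell=\lfloor1/\eta'\rfloor$, and $0<\delta_0<1$. Then there exists a positive integer $n_s=n_s(\delta_0,\eta')$ such that for all $n\ge n_s$ and all $\delta\ge\delta_0$ with $\delta n$ a positive integer, and every path $\pi$ of length $\delta n$ in $\mathcal W_n$, $$\mathbb{P}\big(E^\pi_{\eta',n}\,\big|\,A(\pi)\le\lambda\big)\le 2n\,\mathrm{e}^{-\delta n\eta'/16},$$ where $E^\pi_{\eta',n}$ is the event that $\Lambda_k>\lambda+\sqrt{\eta'}$ for some integer $1\le k\le\delta n/(2\ell)$.
   Context: $\mathcal W_n$ is the complete graph on $n$ vertices whose edges carry i.i.d. exponential weights with mean $n$; $A(\pi)$ denotes the average edge weight of a path $\pi$. For a path $\pi$ of length $\delta n$ let $X_1,\dots,X_{\delta n}$ be its successive edge weights, $S_k=\sum_{i=1}^kX_i$, and $\Lambda_k=(S_{\delta n}-S_{(k-1)\ell})/(\delta n-(k-1)\ell)$. *)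

theory Defs
  imports "HOL-Probability.Probability"
begin

definition Kedges :: "nat \<Rightarrow> nat set set" where
  "Kedges n = {{u, v} | u v. u < n \<and> v < n \<and> u \<noteq> v}"

text \<open>The weighted complete graph W_n: i.i.d. exponential edge weights with mean n
  (rate 1/n), as a product probability measure over the edges.\<close>
definition Wn :: "nat \<Rightarrow> (nat set \<Rightarrow> real) measure" where
  "Wn n = PiM (Kedges n) (\<lambda>_. density lborel (\<lambda>x. ennreal (exponential_density (1 / real n) x)))"

definition is_path :: "nat \<Rightarrow> nat \<Rightarrow> nat list \<Rightarrow> bool" where
  "is_path n m vs \<longleftrightarrow> length vs = m + 1 \<and> distinct vs \<and> (\<forall>v\<in>set vs. v < n)"

definition pathX :: "nat list \<Rightarrow> (nat set \<Rightarrow> real) \<Rightarrow> nat \<Rightarrow> real" where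
  "pathX vs w i = w {vs ! (i - 1), vs ! i}"

definition pathS :: "nat list \<Rightarrow> (nat set \<Rightarrow> real) \<Rightarrow> nat \<Rightarrow> real" where
  "pathS vs w k = (\<Sum>i = 1..k. pathX vs w i)"

definition avgW :: "nat list \<Rightarrow> nat \<Rightarrow> (nat set \<Rightarrow> real) \<Rightarrow> real" where
  "avgW vs m w = pathS vs w m / real m"

definition LambdaK :: "nat list \<Rightarrow> nat \<Rightarrow> nat \<Rightarrow> (nat set \<Rightarrow> real) \<Rightarrow> nat \<Rightarrow> real" where
  "LambdaK vs m l w k =
     (pathS vs w m - pathS vs w ((k - 1) * l)) / (real m - real ((k - 1) * l))"

end

theory Submission
  imports Defs
begin

text \<open>Change of measure.  If \<open>A(\<pi>) \<le> \<lambda>\<close> but \<open>\<Lambda>\<^sub>k > \<lambda> + s\<close> with \<open>s = \<surd>\<eta>'\<close>, then the first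
  \<open>a = (k - 1)\<ell>\<close> edges of \<open>\<pi>\<close> carry total weight below \<open>\<lambda>a - sj\<close>, where \<open>j = \<delta>n - a \<ge> \<delta>n/2\<close>, while
  the remaining \<open>j\<close> edges carry more than \<open>(\<lambda> + s) j\<close>.  Multiplying the first \<open>a\<close> weights by a
  factor \<open>C \<ge> 1\<close> and the other \<open>j\<close> by \<open>D < 1\<close> keeps the average below \<open>\<lambda>\<close>, and for
  i.i.d. exponential weights this map enlarges probabilities by at least \<open>C\<^sup>a D\<^sup>j\<close> on the event.
  With the right choice of \<open>C, D\<close> one gets \<open>C\<^sup>a D\<^sup>j \<ge> exp (j s\<^sup>2 / (10 \<lambda>\<^sup>2)) \<ge> exp (\<delta>n\<eta>'/16)\<close>,
  hence \<open>P(\<Lambda>\<^sub>k > \<lambda> + s, A(\<pi>) \<le> \<lambda>) \<le> exp (-\<delta>n\<eta>'/16) P(A(\<pi>) \<le> \<lambda>)\<close>; a union bound over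
  fewer than \<open>n\<close> values of \<open>k\<close> finishes the proof.\<close>

definition exponential_measure :: "real \<Rightarrow> real measure" where
  "exponential_measure r = density lborel (\<lambda>x. ennreal (exponential_density r x))"

lemma sets_exponential_measure [simp, measurable_cong]: "sets (exponential_measure r) = sets borel"
  by (simp add: exponential_measure_def)

lemma space_exponential_measure [simp]: "space (exponential_measure r) = UNIV"
  by (simp add: exponential_measure_def)

lemma prob_space_exponential_measure: "0 < r \<Longrightarrow> prob_space (exponential_measure r)"
  unfolding exponential_measure_def by (rule prob_space_exponential_density)

lemma finite_product_prob_space_exponential_measure:
  "finite I \<Longrightarrow> 0 < r \<Longrightarrow> finite_product_prob_space (\<lambda>_. exponential_measure r) I"
  by (simp add: finite_product_prob_space_def finite_product_sigma_finite_def product_prob_space_def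
      product_sigma_finite_def prob_space_imp_sigma_finite prob_space_exponential_measure
      product_prob_space_axioms_def finite_product_sigma_finite_axioms_def)

lemma exponential_density_scale:
  assumes r: "0 < r" and c: "0 < c"
  shows "ennreal c * ennreal (exponential_density r (c * y))
       = ennreal (exponential_density r y) * ennreal (c * exp (-(c - 1) * y * r))"
proof -
  have "c * exponential_density r (c * y) = exponential_density r y * (c * exp (-(c - 1) * y * r))"
  proof (cases "y < 0")
    case True
    then show ?thesis using c by (simp add: exponential_density_def mult_pos_neg)
  next
    case False
    then have "\<not> c * y < 0" using c by (simp add: not_less)
    then show ?thesis using False
      by (simp add: exponential_density_def exp_add[symmetric] algebra_simps)
  qed
  then show ?thesis
    using r c by (simp add: ennreal_mult[symmetric] exponential_density_nonneg)
qed

lemma distr_exponential_measure_divide: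
  assumes r: "0 < r" and c: "0 < c"
  shows "distr (exponential_measure r) borel (\<lambda>x. x / c)
       = density (exponential_measure r) (\<lambda>x. ennreal (c * exp (-(c - 1) * x * r)))"
proof (rule measure_eqI)
  fix B assume "B \<in> sets (distr (exponential_measure r) borel (\<lambda>x. x / c))"
  then have [measurable]: "B \<in> sets borel" by simp
  have "(\<lambda>x. x / c) -` B \<in> sets borel"
    using measurable_sets_borel[of "\<lambda>x. x / c" borel B] by simp
  then have "emeasure (distr (exponential_measure r) borel (\<lambda>x. x / c)) B
      = (\<integral>\<^sup>+ x. ennreal (exponential_density r x) * indicator B (x / c) \<partial>lborel)"
    by (auto simp: emeasure_distr exponential_measure_def emeasure_density indicator_def)
  also have "\<dots> = ennreal \<bar>c\<bar> * (\<integral>\<^sup>+ y. ennreal (exponential_density r (0 + c * y))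
                    * indicator B ((0 + c * y) / c) \<partial>lborel)"
    by (rule nn_integral_real_affine) (use c in auto)
  also have "\<dots> = (\<integral>\<^sup>+ y. ennreal (exponential_density r y)
                    * (ennreal (c * exp (-(c - 1) * y * r)) * indicator B y) \<partial>lborel)"
  proof -
    have "ennreal \<bar>c\<bar> * (ennreal (exponential_density r (0 + c * y)) * indicator B ((0 + c * y) / c))
        = ennreal (exponential_density r y) * (ennreal (c * exp (-(c - 1) * y * r)) * indicator B y)"
      for y
      using exponential_density_scale[OF r c, of y] c by (simp add: mult.assoc[symmetric])
    then show ?thesis by (simp add: nn_integral_cmult[symmetric])
  qed
  also have "\<dots> = emeasure (density (exponential_measure r)
                    (\<lambda>x. ennreal (c * exp (-(c - 1) * x * r)))) B"
    by (simp add: emeasure_density exponential_measure_def nn_integral_density)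
  finally show "emeasure (distr (exponential_measure r) borel (\<lambda>x. x / c)) B = \<dots>" .
qed simp

lemma distr_PiM_exponential_divide:
  fixes c :: "'i \<Rightarrow> real"
  assumes I: "finite I" and r: "0 < r" and c: "\<And>i. i \<in> I \<Longrightarrow> 0 < c i"
  defines "W \<equiv> PiM I (\<lambda>_. exponential_measure r)"
  shows "distr W W (\<lambda>w. \<lambda>i\<in>I. w i / c i)
       = density W (\<lambda>w. \<Prod>i\<in>I. ennreal (c i * exp (-(c i - 1) * w i * r)))"
proof -
  interpret F: finite_product_prob_space "\<lambda>_. exponential_measure r" I
    using I r by (rule finite_product_prob_space_exponential_measure)
  have [measurable]: "(\<lambda>w. \<lambda>i\<in>I. w i / c i) \<in> measurable W W"
    unfolding W_def by measurable
  show ?thesis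
  proof (rule measure_eqI_PiM_finite[where M="\<lambda>_. exponential_measure r" and I=I and A="\<lambda>_. space W"])
    show "range (\<lambda>_. space W) \<subseteq> prod_algebra I (\<lambda>_. exponential_measure r)"
      using space_in_prod_algebra[of I "\<lambda>_. exponential_measure r"] by (auto simp: W_def space_PiM)
  next
    fix A assume A: "\<And>i. i \<in> I \<Longrightarrow> A i \<in> sets (exponential_measure r)"
    then have [measurable]: "i \<in> I \<Longrightarrow> A i \<in> sets borel" for i by simp
    have "emeasure (distr W W (\<lambda>w. \<lambda>i\<in>I. w i / c i)) (Pi\<^sub>E I A)
        = emeasure W ((\<lambda>w. \<lambda>i\<in>I. w i / c i) -` Pi\<^sub>E I A \<inter> space W)"
      by (rule emeasure_distr) (auto intro!: sets_PiM_I_finite A simp: I W_def)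
    also have "(\<lambda>w. \<lambda>i\<in>I. w i / c i) -` Pi\<^sub>E I A \<inter> space W = Pi\<^sub>E I (\<lambda>i. (\<lambda>x. x / c i) -` A i)"
      by (auto simp: W_def space_PiM PiE_def Pi_def)
    also have "emeasure W \<dots> = (\<Prod>i\<in>I. emeasure (exponential_measure r) ((\<lambda>x. x / c i) -` A i))"
      unfolding W_def
      by (rule F.measure_times) (use measurable_sets_borel[of "\<lambda>x. x / c _" borel] in auto)
    also have "\<dots> = (\<Prod>i\<in>I. emeasure (distr (exponential_measure r) borel (\<lambda>x. x / c i)) (A i))"
      by (intro prod.cong refl) (simp add: emeasure_distr)
    also have "\<dots> = (\<Prod>i\<in>I. \<integral>\<^sup>+ x. ennreal (c i * exp (-(c i - 1) * x * r)) * indicator (A i) x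
                                 \<partial>exponential_measure r)"
      using A by (intro prod.cong refl) (simp add: distr_exponential_measure_divide[OF r c] emeasure_density)
    also have "\<dots> = (\<integral>\<^sup>+ w. (\<Prod>i\<in>I. ennreal (c i * exp (-(c i - 1) * w i * r)) * indicator (A i) (w i)) \<partial>W)"
      unfolding W_def by (rule F.product_nn_integral_prod[symmetric]) (auto simp: I)
    also have "\<dots> = (\<integral>\<^sup>+ w. (\<Prod>i\<in>I. ennreal (c i * exp (-(c i - 1) * w i * r))) * indicator (Pi\<^sub>E I A) w \<partial>W)"
    proof (rule nn_integral_cong)
      fix w assume "w \<in> space W"
      then have "indicator (Pi\<^sub>E I A) w = (\<Prod>i\<in>I. indicator (A i) (w i) :: ennreal)"
        using I by (auto simp: W_def space_PiM indicator_def PiE_def Pi_def extensional_def prod.neutral)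
      then show "(\<Prod>i\<in>I. ennreal (c i * exp (-(c i - 1) * w i * r)) * indicator (A i) (w i))
          = (\<Prod>i\<in>I. ennreal (c i * exp (-(c i - 1) * w i * r))) * indicator (Pi\<^sub>E I A) w"
        by (simp add: prod.distrib)
    qed
    also have "\<dots> = emeasure (density W (\<lambda>w. \<Prod>i\<in>I. ennreal (c i * exp (-(c i - 1) * w i * r)))) (Pi\<^sub>E I A)"
      by (rule emeasure_density[symmetric]) (auto intro!: sets_PiM_I_finite A simp: I W_def)
    finally show "emeasure (distr W W (\<lambda>w. \<lambda>i\<in>I. w i / c i)) (Pi\<^sub>E I A) = \<dots>" .
  qed (auto simp: I W_def emeasure_distr)
qed

text \<open>The pushforward of the product measure under \<open>w \<mapsto> c \<cdot> w\<close> has density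
  \<open>\<Prod> c\<^sub>i \<cdot> exp (-r \<Sum> (c\<^sub>i - 1) w\<^sub>i) \<ge> \<Prod> c\<^sub>i\<close> on \<open>A\<close>.\<close>

lemma PiM_exponential_rescale_le:
  fixes c :: "'i \<Rightarrow> real"
  assumes I: "finite I" and r: "0 < r" and c: "\<And>i. i \<in> I \<Longrightarrow> 0 < c i"
  defines "W \<equiv> PiM I (\<lambda>_. exponential_measure r)"
  assumes A[measurable]: "A \<in> sets W" and B[measurable]: "B \<in> sets W"
    and tilt: "\<And>w. w \<in> A \<Longrightarrow> (\<Sum>i\<in>I. (c i - 1) * w i) \<le> 0"
    and maps_to: "\<And>w. w \<in> A \<Longrightarrow> (\<lambda>i\<in>I. c i * w i) \<in> B"
  shows "(\<Prod>i\<in>I. c i) * measure W A \<le> measure W B"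
proof -
  interpret F: finite_product_prob_space "\<lambda>_. exponential_measure r" I
    using I r by (rule finite_product_prob_space_exponential_measure)
  let ?t = "\<lambda>w. \<lambda>i\<in>I. w i / c i"
  let ?J = "\<Prod>i\<in>I. c i"
  have J: "0 < ?J" using c by (simp add: prod_pos)
  have [measurable]: "?t \<in> measurable W W"
    unfolding W_def by measurable
  have preimage: "?t -` A \<inter> space W \<subseteq> B"
  proof
    fix v assume v: "v \<in> ?t -` A \<inter> space W"
    have "(\<lambda>i\<in>I. c i * ?t v i) = v"
      using v c by (force simp: W_def space_PiM PiE_def extensional_def)
    with maps_to[of "?t v"] v show "v \<in> B" by simp
  qed
  have density_ge: "ennreal ?J \<le> (\<Prod>i\<in>I. ennreal (c i * exp (-(c i - 1) * w i * r)))"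
    if "w \<in> A" for w
  proof -
    have "(\<Prod>i\<in>I. c i * exp (-(c i - 1) * w i * r)) = ?J * exp (- r * (\<Sum>i\<in>I. (c i - 1) * w i))"
      using I by (simp add: prod.distrib exp_sum[symmetric] sum_distrib_left algebra_simps)
    moreover have "1 \<le> exp (- r * (\<Sum>i\<in>I. (c i - 1) * w i))"
      using tilt[OF that] r by (simp add: mult_nonneg_nonpos)
    ultimately have "?J \<le> (\<Prod>i\<in>I. c i * exp (-(c i - 1) * w i * r))"
      using J by simp
    then show ?thesis
      using c by (simp add: prod_ennreal less_imp_le ennreal_leI)
  qed
  have "ennreal ?J * emeasure W A = (\<integral>\<^sup>+ w. ennreal ?J * indicator A w \<partial>W)"
    by (simp add: nn_integral_cmult)
  also have "\<dots> \<le> (\<integral>\<^sup>+ w. (\<Prod>i\<in>I. ennreal (c i * exp (-(c i - 1) * w i * r))) * indicator A w \<partial>W)"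
    using density_ge by (intro nn_integral_mono) (simp split: split_indicator)
  also have "\<dots> = emeasure (density W (\<lambda>w. \<Prod>i\<in>I. ennreal (c i * exp (-(c i - 1) * w i * r)))) A"
    by (rule emeasure_density[symmetric]) (use A in \<open>auto simp: W_def\<close>)
  also have "\<dots> = emeasure (distr W W ?t) A"
    using distr_PiM_exponential_divide[OF I r c] by (simp add: W_def)
  also have "\<dots> \<le> emeasure W B"
    using preimage by (simp add: emeasure_distr emeasure_mono)
  finally show ?thesis
    using J by (simp add: F.emeasure_eq_measure[folded W_def] ennreal_mult'[symmetric] ennreal_le_iff)
qed

definition path_edge :: "nat list \<Rightarrow> nat \<Rightarrow> nat set" where
  "path_edge vs i = {vs ! (i - 1), vs ! i}"

lemma pathX_eq_path_edge: "pathX vs w i = w (path_edge vs i)"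
  by (simp add: pathX_def path_edge_def)

lemma pathS_eq_sum_path_edge: "pathS vs w k = (\<Sum>i=1..k. w (path_edge vs i))"
  by (simp add: pathS_def pathX_eq_path_edge)

lemma finite_Kedges: "finite (Kedges n)"
proof -
  have "Kedges n \<subseteq> (\<lambda>(u, v). {u, v}) ` ({..<n} \<times> {..<n})"
    by (auto simp: Kedges_def)
  then show ?thesis by (rule finite_subset) auto
qed

lemma Wn_eq_PiM: "Wn n = PiM (Kedges n) (\<lambda>_. exponential_measure (1 / real n))"
  by (simp add: Wn_def exponential_measure_def)

lemma prob_space_Wn: "0 < n \<Longrightarrow> prob_space (Wn n)"
  unfolding Wn_eq_PiM by (rule prob_space_PiM) (simp add: prob_space_exponential_measure)

lemma path_length_less:
  assumes "is_path n m vs"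
  shows "m < n"
proof -
  have "card (set vs) = m + 1" using assms by (simp add: is_path_def distinct_card)
  moreover have "card (set vs) \<le> n"
    using assms card_mono[of "{..<n}" "set vs"] by (auto simp: is_path_def)
  ultimately show ?thesis by simp
qed

lemma path_edge_in_Kedges:
  assumes "is_path n m vs" "i \<in> {1..m}"
  shows "path_edge vs i \<in> Kedges n"
proof -
  have "vs ! (i - 1) \<noteq> vs ! i" "vs ! (i - 1) < n" "vs ! i < n"
    using assms by (auto simp: is_path_def nth_eq_iff_index_eq)
  then show ?thesis unfolding Kedges_def path_edge_def by blast
qed

lemma inj_on_path_edge:
  assumes "is_path n m vs"
  shows "inj_on (path_edge vs) {1..m}"
proof
  fix i j assume i: "i \<in> {1..m}" and j: "j \<in> {1..m}" and e: "path_edge vs i = path_edge vs j"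
  have nth_eq: "p \<le> m \<Longrightarrow> q \<le> m \<Longrightarrow> vs ! p = vs ! q \<longleftrightarrow> p = q" for p q
    using assms by (simp add: is_path_def nth_eq_iff_index_eq)
  from e have "vs ! (i - 1) = vs ! (j - 1) \<and> vs ! i = vs ! j \<or> vs ! (i - 1) = vs ! j \<and> vs ! i = vs ! (j - 1)"
    unfolding path_edge_def by (simp add: doubleton_eq_iff)
  then show "i = j" using nth_eq i j by auto
qed

lemma borel_measurable_component_exponential:
  "e \<in> I \<Longrightarrow> (\<lambda>w. w e) \<in> borel_measurable (PiM I (\<lambda>_. exponential_measure r))"
  using measurable_component_singleton[of e I "\<lambda>_. exponential_measure r"]
  by (simp add: measurable_cong_sets[OF refl sets_exponential_measure])

lemma borel_measurable_pathS:
  assumes "is_path n m vs" "k \<le> m"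
  shows "(\<lambda>w. pathS vs w k) \<in> borel_measurable (Wn n)"
  unfolding pathS_eq_sum_path_edge Wn_eq_PiM
  using path_edge_in_Kedges[OF assms(1)] assms(2)
  by (intro borel_measurable_sum borel_measurable_component_exponential) auto

lemma sets_avgW_le:
  assumes "is_path n m vs"
  shows "{w \<in> space (Wn n). avgW vs m w \<le> lam} \<in> sets (Wn n)"
  using borel_measurable_pathS[OF assms order_refl] unfolding avgW_def by measurable

lemma measure_path_reweight_le:
  assumes path: "is_path n m vs" and m: "0 < m" and n: "0 < n"
    and g: "\<And>i. i \<in> {1..m} \<Longrightarrow> 0 < g i"
    and A: "A \<in> sets (Wn n)" and A_avg: "\<And>w. w \<in> A \<Longrightarrow> avgW vs m w \<le> lam"
    and tilt: "\<And>w. w \<in> A \<Longrightarrow> (\<Sum>i=1..m. (g i - 1) * pathX vs w i) \<le> 0"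
  shows "(\<Prod>i=1..m. g i) * measure (Wn n) A \<le> measure (Wn n) {w \<in> space (Wn n). avgW vs m w \<le> lam}"
proof -
  let ?E = "path_edge vs ` {1..m}"
  define c where "c e = (if e \<in> ?E then g (the_inv_into {1..m} (path_edge vs) e) else 1)" for e
  have inj: "inj_on (path_edge vs) {1..m}" by (rule inj_on_path_edge[OF path])
  have E_sub: "?E \<subseteq> Kedges n" using path_edge_in_Kedges[OF path] by auto
  have c_edge: "c (path_edge vs i) = g i" if "i \<in> {1..m}" for i
    using that inj by (simp add: c_def the_inv_into_f_f)
  have c_pos: "0 < c e" for e
    using g c_edge by (auto simp: c_def)
  have sum_c: "(\<Sum>e\<in>Kedges n. (c e - 1) * w e) = (\<Sum>i=1..m. (g i - 1) * pathX vs w i)" for w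
  proof -
    have "(\<Sum>e\<in>Kedges n. (c e - 1) * w e) = (\<Sum>e\<in>?E. (c e - 1) * w e)"
      using E_sub finite_Kedges by (intro sum.mono_neutral_right) (auto simp: c_def)
    also have "\<dots> = (\<Sum>i=1..m. (g i - 1) * pathX vs w i)"
      unfolding sum.reindex[OF inj] by (simp add: c_edge pathX_eq_path_edge)
    finally show ?thesis .
  qed
  have prod_c: "(\<Prod>e\<in>Kedges n. c e) = (\<Prod>i=1..m. g i)"
  proof -
    have "(\<Prod>e\<in>Kedges n. c e) = (\<Prod>e\<in>?E. c e)"
      using E_sub finite_Kedges by (intro prod.mono_neutral_right) (auto simp: c_def)
    also have "\<dots> = (\<Prod>i=1..m. g i)"
      unfolding prod.reindex[OF inj] by (simp add: c_edge)
    finally show ?thesis .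
  qed
  have pathS_rescaled: "pathS vs (\<lambda>e\<in>Kedges n. c e * w e) m
      = pathS vs w m + (\<Sum>i=1..m. (g i - 1) * pathX vs w i)" for w
    using E_sub by (auto simp: pathS_def pathX_eq_path_edge c_edge algebra_simps
        sum.distrib[symmetric] intro!: sum.cong)
  have "(\<Prod>e\<in>Kedges n. c e) * measure (Wn n) A \<le> measure (Wn n) {w \<in> space (Wn n). avgW vs m w \<le> lam}"
    unfolding Wn_eq_PiM
  proof (rule PiM_exponential_rescale_le[OF finite_Kedges _ c_pos])
    show "A \<in> sets (PiM (Kedges n) (\<lambda>_. exponential_measure (1 / real n)))"
      using A by (simp add: Wn_eq_PiM)
    show "{w \<in> space (PiM (Kedges n) (\<lambda>_. exponential_measure (1 / real n))). avgW vs m w \<le> lam}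
        \<in> sets (PiM (Kedges n) (\<lambda>_. exponential_measure (1 / real n)))"
      using sets_avgW_le[OF path] by (simp add: Wn_eq_PiM)
  next
    fix w assume w: "w \<in> A"
    show "(\<Sum>e\<in>Kedges n. (c e - 1) * w e) \<le> 0"
      using tilt[OF w] by (simp add: sum_c)
    have "avgW vs m (\<lambda>e\<in>Kedges n. c e * w e) \<le> avgW vs m w"
      using tilt[OF w] m by (simp add: avgW_def pathS_rescaled divide_right_mono)
    then show "(\<lambda>e\<in>Kedges n. c e * w e)
        \<in> {w \<in> space (PiM (Kedges n) (\<lambda>_. exponential_measure (1 / real n))). avgW vs m w \<le> lam}"
      using A_avg[OF w] by (simp add: space_PiM)
  qed (use n in simp)
  then show ?thesis by (simp add: prod_c)
qed

lemma measure_path_two_block_reweight_le: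
  assumes path: "is_path n m vs" and m: "0 < m" and n: "0 < n" and a: "a \<le> m"
    and C: "0 < C" and D: "0 < D"
    and A: "A \<in> sets (Wn n)" and A_avg: "\<And>w. w \<in> A \<Longrightarrow> avgW vs m w \<le> lam"
    and tilt: "\<And>w. w \<in> A \<Longrightarrow> (C - 1) * pathS vs w a + (D - 1) * (pathS vs w m - pathS vs w a) \<le> 0"
  shows "C ^ a * D ^ (m - a) * measure (Wn n) A \<le> measure (Wn n) {w \<in> space (Wn n). avgW vs m w \<le> lam}"
proof -
  define g where "g i = (if i \<le> a then C else D)" for i :: nat
  have blocks: "{1..m} = {1..a} \<union> {a + 1..m}" using a by auto
  have "(\<Prod>i=1..m. g i) = C ^ a * D ^ (m - a)"
    unfolding blocks by (subst prod.union_disjoint) (auto simp: g_def)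
  moreover have "(\<Sum>i=1..m. (g i - 1) * pathX vs w i)
      = (C - 1) * pathS vs w a + (D - 1) * (pathS vs w m - pathS vs w a)" for w
    unfolding pathS_def blocks by (subst (1 2) sum.union_disjoint) (auto simp: g_def sum_distrib_left)
  moreover have "(\<Prod>i=1..m. g i) * measure (Wn n) A \<le> measure (Wn n) {w \<in> space (Wn n). avgW vs m w \<le> lam}"
    using tilt calculation(2)
    by (intro measure_path_reweight_le[OF path m n _ A A_avg]) (auto simp: g_def C D)
  ultimately show ?thesis by simp
qed

lemma exp_mult_le_power:
  fixes x :: real
  assumes "0 \<le> x" "x < 1"
  shows "exp (x * real a) \<le> (1 / (1 - x)) ^ a"
proof -
  have "(1 - x) * exp x \<le> exp (-x) * exp x"
    using exp_ge_add_one_self[of "-x"] by (intro mult_right_mono) auto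
  then have "exp x \<le> 1 / (1 - x)"
    using assms by (simp add: exp_minus field_simps)
  then show ?thesis
    by (simp add: exp_of_nat2_mult power_mono)
qed

lemma one_plus_mult_exp_le_exp:
  fixes u :: real
  assumes u0: "0 \<le> u" and u1: "u \<le> 3/2"
  shows "(1 + u) * exp (u\<^sup>2 / 10) \<le> exp u"
proof -
  define y where "y = u - u\<^sup>2 / 10"
  have "u * u \<le> 3/2 * u" using u1 u0 by (rule mult_right_mono)
  then have y_ge: "u * (17/20) \<le> y" unfolding y_def power2_eq_square by linarith
  then have "(u * (17/20)) * (u * (17/20)) \<le> y * y" using u0 by (intro mult_mono) auto
  moreover have "u = y + u * u / 10" by (simp add: y_def power2_eq_square)
  ultimately have "1 + u \<le> 1 + y + y\<^sup>2 / 2"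
    using mult_nonneg_nonneg[OF u0 u0] unfolding power2_eq_square by linarith
  also have "\<dots> \<le> exp y"
    using y_ge u0 by (intro exp_lower_Taylor_quadratic) linarith
  finally have "(1 + u) * exp (u\<^sup>2 / 10) \<le> exp y * exp (u\<^sup>2 / 10)"
    by (simp add: mult_right_mono)
  also have "\<dots> = exp u" by (simp add: y_def exp_add[symmetric])
  finally show ?thesis .
qed

lemma tilting_factors_ge:
  fixes lam s :: real and a j :: nat
  assumes lam: "1/3 \<le> lam" and s: "0 < s" "s \<le> 1/2" and head: "0 < lam * a - s * j"
  shows "exp (real j * (s / lam)\<^sup>2 / 10) \<le> (lam * a / (lam * a - s * j)) ^ a * (lam / (lam + s)) ^ j"
proof -
  define u where "u = s / lam"
  define x where "x = s * j / (lam * a)"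
  have lam0: "0 < lam" using lam by simp
  have "0 \<le> s * real j" using s by simp
  then have a0: "0 < real a" using head by (cases a) auto
  have u: "0 \<le> u" "u \<le> 3/2" using s lam lam0 by (auto simp: u_def field_simps)
  have x: "0 \<le> x" "x < 1" using s lam0 a0 head by (auto simp: x_def field_simps)
  have "exp (real j * u) = exp (x * real a)"
    using lam0 a0 by (simp add: x_def u_def)
  also have "\<dots> \<le> (lam * a / (lam * a - s * j)) ^ a"
  proof -
    have "1 / (1 - x) = lam * a / (lam * a - s * j)"
      using lam0 a0 head by (simp add: x_def field_simps)
    then show ?thesis using exp_mult_le_power[OF x, of a] by simp
  qed
  finally have head_factor: "exp (real j * u) \<le> (lam * a / (lam * a - s * j)) ^ a" .
  have "exp (real j * u\<^sup>2 / 10) = exp (u\<^sup>2 / 10) ^ j"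
    by (simp add: exp_of_nat_mult[symmetric] mult.commute)
  also have "\<dots> \<le> (exp u / (1 + u)) ^ j"
    using one_plus_mult_exp_le_exp[OF u] u by (intro power_mono) (simp_all add: field_simps)
  also have "\<dots> = exp (real j * u) * (lam / (lam + s)) ^ j"
    using lam0 s by (simp add: u_def power_divide exp_of_nat_mult[symmetric] field_simps)
  also have "\<dots> \<le> (lam * a / (lam * a - s * j)) ^ a * (lam / (lam + s)) ^ j"
    using head_factor lam0 s by (intro mult_right_mono) simp_all
  finally show ?thesis by (simp add: u_def)
qed

text \<open>The factors \<open>C = \<lambda>a / (\<lambda>a - sj)\<close> and \<open>D = \<lambda> / (\<lambda> + s)\<close> make the tilt vanish exactly when
  \<open>S\<^sub>a = \<lambda>a - sj\<close> and \<open>S\<^sub>m - S\<^sub>a = (\<lambda> + s) j\<close>; if \<open>\<lambda>a \<le> sj\<close> the head sum is negative and any \<open>C \<ge> 1\<close> works.\<close>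

lemma exists_tilting_factors:
  fixes lam s :: real and a j :: nat
  assumes lam: "1/3 \<le> lam" and s: "0 < s" "s \<le> 1/2" and a: "1 \<le> a"
  obtains C D where "0 < C" "0 < D"
    and "\<And>Sa Sj. Sa < lam * a - s * j \<Longrightarrow> (lam + s) * j < Sj \<Longrightarrow> (C - 1) * Sa + (D - 1) * Sj \<le> 0"
    and "exp (real j * (s / lam)\<^sup>2 / 10) \<le> C ^ a * D ^ j"
proof -
  define D where "D = lam / (lam + s)"
  have lam0: "0 < lam" using lam by simp
  have D: "0 < D" "D \<le> 1" using lam0 s by (simp_all add: D_def)
  have D_tilt: "(D - 1) * Sj \<le> - (s * j)" if "(lam + s) * j < Sj" for Sj
  proof -
    have "(D - 1) * Sj \<le> (D - 1) * ((lam + s) * j)"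
      using that D by (intro mult_left_mono_neg) auto
    also have "\<dots> = - (s * j)" using lam0 s by (simp add: D_def field_simps)
    finally show ?thesis .
  qed
  show ?thesis
  proof (cases "0 < lam * a - s * j")
    case True
    define C where "C = lam * a / (lam * a - s * j)"
    have C1: "C - 1 = s * j / (lam * a - s * j)" using True by (simp add: C_def field_simps)
    show ?thesis
    proof (rule that[of C D])
      show "0 < C" using True lam0 a by (simp add: C_def)
      show "0 < D" by fact
      fix Sa Sj :: real assume Sa: "Sa < lam * a - s * j" and Sj: "(lam + s) * j < Sj"
      have "(C - 1) * Sa \<le> (C - 1) * (lam * a - s * j)"
        using Sa True s unfolding C1 by (intro mult_left_mono) auto
      also have "\<dots> = s * j" unfolding C1 using True by simp
      finally show "(C - 1) * Sa + (D - 1) * Sj \<le> 0" using D_tilt[OF Sj] by simp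
    next
      show "exp (real j * (s / lam)\<^sup>2 / 10) \<le> C ^ a * D ^ j"
        unfolding C_def D_def by (rule tilting_factors_ge[OF lam s True])
    qed
  next
    case False
    define C where "C = exp (real j * (s / lam)\<^sup>2 / 10) * (1 / D) ^ j"
    have "1 \<le> exp (real j * (s / lam)\<^sup>2 / 10)" "1 \<le> (1 / D) ^ j"
      using D by (simp_all add: one_le_power)
    then have C1: "1 \<le> C"
      unfolding C_def using mult_mono[of 1 _ 1] by fastforce
    show ?thesis
    proof (rule that[of C D])
      show "0 < C" using C1 by simp
      show "0 < D" by fact
      fix Sa Sj :: real assume "Sa < lam * a - s * j" and Sj: "(lam + s) * j < Sj"
      then have "(C - 1) * Sa \<le> 0" using False C1 by (simp add: mult_nonneg_nonpos)
      moreover have "(D - 1) * Sj \<le> 0" using D_tilt[OF Sj] s by (smt (verit) of_nat_0_le_iff mult_nonneg_nonneg)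
      ultimately show "(C - 1) * Sa + (D - 1) * Sj \<le> 0" by simp
    next
      have "C * D ^ j \<le> C ^ a * D ^ j"
        using C1 a D by (intro mult_right_mono) (auto intro: order_trans[OF _ power_increasing[of 1 a C]])
      then show "exp (real j * (s / lam)\<^sup>2 / 10) \<le> C ^ a * D ^ j"
        using D by (simp add: C_def power_one_over field_simps)
    qed
  qed
qed

lemma measure_large_tail_average_le:
  fixes lam \<eta>' :: real and n m l k :: nat
  assumes lam: "1/3 \<le> lam" "lam \<le> 3/4" and \<eta>': "0 < \<eta>'" "\<eta>' \<le> 1/4" and l: "1 \<le> l"
    and path: "is_path n m vs" and m: "0 < m" and n: "0 < n"
    and k: "2 \<le> k" "real k \<le> real m / (2 * real l)"
  shows "measure (Wn n) {w \<in> space (Wn n). lam + sqrt \<eta>' < LambdaK vs m l w k \<and> avgW vs m w \<le> lam}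
    \<le> exp (- (real m * \<eta>' / 16)) * measure (Wn n) {w \<in> space (Wn n). avgW vs m w \<le> lam}"
    (is "measure _ ?E \<le> _ * measure _ ?F")
proof -
  define a where "a = (k - 1) * l"
  define j where "j = m - a"
  define s where "s = sqrt \<eta>'"
  have "real a + real l = real k * real l" using k(1) by (simp add: a_def algebra_simps of_nat_diff)
  moreover have "real k * real l * 2 \<le> real m" using k(2) l by (simp add: field_simps)
  ultimately have a_half: "2 * real a < real m" using l by linarith
  then have a_le: "a \<le> m" by linarith
  have a1: "1 \<le> a" using k l by (simp add: a_def)
  have j: "real j = real m - real a" using a_le by (simp add: j_def)
  have s: "0 < s" "s \<le> 1/2" "s\<^sup>2 = \<eta>'"
    using \<eta>' real_sqrt_le_mono[of \<eta>' "1/4"] by (simp_all add: s_def real_sqrt_divide)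
  obtain C D where C: "0 < C" and D: "0 < D"
    and tilt: "\<And>Sa Sj. Sa < lam * a - s * j \<Longrightarrow> (lam + s) * j < Sj \<Longrightarrow> (C - 1) * Sa + (D - 1) * Sj \<le> 0"
    and gain: "exp (real j * (s / lam)\<^sup>2 / 10) \<le> C ^ a * D ^ j"
    using exists_tilting_factors[OF lam(1) s(1,2) a1] by blast
  have [measurable]: "(\<lambda>w. pathS vs w m) \<in> borel_measurable (Wn n)"
    "(\<lambda>w. pathS vs w a) \<in> borel_measurable (Wn n)"
    using borel_measurable_pathS[OF path] a_le by auto
  have E: "?E \<in> sets (Wn n)"
    unfolding LambdaK_def avgW_def a_def[symmetric] by measurable
  have "(C - 1) * pathS vs w a + (D - 1) * (pathS vs w m - pathS vs w a) \<le> 0" if "w \<in> ?E" for w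
  proof (rule tilt)
    have avg: "pathS vs w m \<le> lam * m" using that m by (simp add: avgW_def field_simps)
    have "lam + s < (pathS vs w m - pathS vs w a) / real j"
      using that j by (simp add: LambdaK_def a_def s_def)
    moreover have "0 < real j" using a_half j by linarith
    ultimately show tail: "(lam + s) * j < pathS vs w m - pathS vs w a"
      by (simp add: field_simps)
    have "real m = real a + real j" using j by simp
    then show "pathS vs w a < lam * a - s * j" using avg tail by (simp add: algebra_simps)
  qed
  then have "C ^ a * D ^ j * measure (Wn n) ?E \<le> measure (Wn n) ?F"
    unfolding j_def by (intro measure_path_two_block_reweight_le[OF path m n a_le C D E]) auto
  moreover have "real m * \<eta>' / 16 \<le> real j * (s / lam)\<^sup>2 / 10"
  proof -
    have "lam\<^sup>2 \<le> (3/4)\<^sup>2" using lam by (intro power_mono) auto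
    then have "\<eta>' * (16/9) \<le> (s / lam)\<^sup>2"
      using lam \<eta>' s(3) by (simp add: power_divide field_simps)
    then have "real m / 2 * (\<eta>' * (16/9)) \<le> real j * (s / lam)\<^sup>2"
      using a_half j \<eta>' by (intro mult_mono) auto
    moreover have "0 \<le> real m * \<eta>'" using \<eta>' by simp
    ultimately show ?thesis by linarith
  qed
  then have "exp (real m * \<eta>' / 16) \<le> C ^ a * D ^ j"
    using gain by (meson exp_le_cancel_iff order_trans)
  ultimately have "exp (real m * \<eta>' / 16) * measure (Wn n) ?E \<le> measure (Wn n) ?F"
    by (meson measure_nonneg mult_right_mono order_trans)
  then show ?thesis
    by (simp add: exp_minus field_simps)
qed

lemma LambdaK_1: "LambdaK vs m l w 1 = avgW vs m w"
  by (simp add: LambdaK_def avgW_def pathS_def)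

lemma measure_some_large_tail_average_le:
  fixes lam \<eta>' :: real and n m l :: nat
  assumes lam: "1/3 \<le> lam" "lam \<le> 3/4" and \<eta>': "0 < \<eta>'" "\<eta>' \<le> 1/4" and l: "1 \<le> l"
    and path: "is_path n m vs" and m: "0 < m" and n: "0 < n"
  shows "measure (Wn n) {w \<in> space (Wn n).
           (\<exists>k. 1 \<le> k \<and> real k \<le> real m / (2 * real l) \<and> lam + sqrt \<eta>' < LambdaK vs m l w k)
           \<and> avgW vs m w \<le> lam}
    \<le> real n * exp (- (real m * \<eta>' / 16)) * measure (Wn n) {w \<in> space (Wn n). avgW vs m w \<le> lam}"
    (is "measure _ ?S \<le> _ * measure _ ?F")
proof -
  interpret prob_space "Wn n" using n by (rule prob_space_Wn)
  define K where "K = {k. 2 \<le> k \<and> real k \<le> real m / (2 * real l)}"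
  define E where "E k = {w \<in> space (Wn n). lam + sqrt \<eta>' < LambdaK vs m l w k \<and> avgW vs m w \<le> lam}" for k
  have K_mem: "2 \<le> k \<and> 2 * (k * l) \<le> m" if "k \<in> K" for k
  proof -
    have "real k * (2 * real l) \<le> real m" using that l by (simp add: K_def field_simps)
    then have "real (2 * (k * l)) \<le> real m" by (simp add: algebra_simps)
    then show ?thesis using that by (simp add: K_def del: of_nat_mult)
  qed
  have K_sub: "K \<subseteq> {2..m}"
  proof
    fix k assume "k \<in> K"
    then have "2 \<le> k" "2 * (k * l) \<le> m" using K_mem by blast+
    moreover have "k \<le> k * l" using l by (metis mult_le_mono2 mult_1_right)
    ultimately have "k \<le> m" by linarith
    with \<open>2 \<le> k\<close> show "k \<in> {2..m}" by simp
  qed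
  then have K: "finite K" "card K \<le> n"
    using finite_subset card_mono[OF _ K_sub] path_length_less[OF path] by fastforce+
  have E: "E k \<in> sets (Wn n)" if "k \<in> K" for k
  proof -
    have [measurable]: "(\<lambda>w. pathS vs w m) \<in> borel_measurable (Wn n)"
      "(\<lambda>w. pathS vs w ((k - 1) * l)) \<in> borel_measurable (Wn n)"
      using borel_measurable_pathS[OF path] K_mem[OF that] by (auto simp: diff_mult_distrib)
    show ?thesis unfolding E_def LambdaK_def avgW_def by measurable
  qed
  have "?S \<subseteq> (\<Union>k\<in>K. E k)"
  proof
    fix w assume "w \<in> ?S"
    then obtain k where w: "w \<in> space (Wn n)" "1 \<le> k" "real k \<le> real m / (2 * real l)"
      "lam + sqrt \<eta>' < LambdaK vs m l w k" "avgW vs m w \<le> lam" by blast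
    moreover have "k \<noteq> 1"
    proof
      assume "k = 1"
      then have "lam + sqrt \<eta>' < avgW vs m w" using w(4) LambdaK_1 by metis
      moreover have "0 < sqrt \<eta>'" using \<eta>' by simp
      ultimately show False using w(5) by linarith
    qed
    ultimately have "k \<in> K" "w \<in> E k" by (auto simp: K_def E_def)
    then show "w \<in> (\<Union>k\<in>K. E k)" by blast
  qed
  then have "measure (Wn n) ?S \<le> (\<Sum>k\<in>K. measure (Wn n) (E k))"
    using E K by (intro order_trans[OF finite_measure_mono measure_UNION_le]) auto
  also have "\<dots> \<le> (\<Sum>k\<in>K. exp (- (real m * \<eta>' / 16)) * measure (Wn n) ?F)"
    unfolding E_def K_def
    by (intro sum_mono measure_large_tail_average_le[OF lam \<eta>' l path m n]) auto
  also have "\<dots> \<le> real n * exp (- (real m * \<eta>' / 16)) * measure (Wn n) ?F"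
    using K by (simp add: mult_right_mono)
  finally show ?thesis .
qed

lemma exp_minus_one_bounds: "1/3 \<le> exp (-1::real)" "exp (-1::real) \<le> 1/2"
proof -
  have "2 \<le> exp (1::real)" "exp (1::real) \<le> 3"
    using exp_ge_add_one_self[of 1] exp_le by simp_all
  then show "1/3 \<le> exp (-1::real)" "exp (-1::real) \<le> 1/2"
    by (simp_all add: exp_minus field_simps)
qed

text \<open>The bound holds already for every \<open>n \<ge> 1\<close>.\<close>

theorem lemma2p4:
  fixes \<eta>' \<delta>0 :: real
  assumes "0 < \<eta>'" and "\<eta>' < 1/4" and "0 < \<delta>0" and "\<delta>0 < 1"
  shows "\<exists>ns::nat. 0 < ns \<and>
    (\<forall>(\<eta>::real) (n::nat) (\<delta>::real) (m::nat) (vs::nat list).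
       0 < \<eta> \<longrightarrow> \<eta> < \<eta>' \<longrightarrow> ns \<le> n \<longrightarrow> \<delta>0 \<le> \<delta> \<longrightarrow>
       0 < m \<longrightarrow> real m = \<delta> * real n \<longrightarrow> is_path n m vs \<longrightarrow>
       (let lam = exp (-1) + \<eta>; l = nat \<lfloor>1 / \<eta>'\<rfloor> in
        cond_prob (Wn n)
          (\<lambda>w. \<exists>k::nat. 1 \<le> k \<and> real k \<le> real m / (2 * real l) \<and>
                 LambdaK vs m l w k > lam + sqrt \<eta>')
          (\<lambda>w. avgW vs m w \<le> lam)
        \<le> 2 * real n * exp (- \<delta> * real n * \<eta>' / 16)))"
proof (intro exI[of _ 1] conjI allI impI)
  fix \<eta> \<delta> :: real and n m :: nat and vs
  assume \<eta>: "0 < \<eta>" "\<eta> < \<eta>'" and n: "1 \<le> n" and "\<delta>0 \<le> \<delta>"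
    and m: "0 < m" and m_eq: "real m = \<delta> * real n" and path: "is_path n m vs"
  define lam where "lam = exp (-1) + \<eta>"
  define l where "l = nat \<lfloor>1 / \<eta>'\<rfloor>"
  have lam: "1/3 \<le> lam" "lam \<le> 3/4"
    using exp_minus_one_bounds \<eta> assms(2) by (simp_all add: lam_def)
  have "1 \<le> 1 / \<eta>'" using assms(1,2) by simp
  then have l: "1 \<le> l" by (simp add: l_def le_nat_floor)
  let ?S = "\<P>(w in Wn n. (\<exists>k. 1 \<le> k \<and> real k \<le> real m / (2 * real l) \<and> LambdaK vs m l w k > lam + sqrt \<eta>')
                   \<and> avgW vs m w \<le> lam)"
  let ?F = "\<P>(w in Wn n. avgW vs m w \<le> lam)"
  let ?bound = "real n * exp (- \<delta> * real n * \<eta>' / 16)"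
  have "?S \<le> ?bound * ?F"
    using measure_some_large_tail_average_le[OF lam _ _ l path m] assms(1,2) n
    by (simp add: m_eq)
  then have "?S / ?F \<le> ?bound"
    using measure_nonneg[of "Wn n"] by (cases "?F = 0") (simp_all add: pos_divide_le_eq less_le)
  also have "\<dots> \<le> 2 * real n * exp (- \<delta> * real n * \<eta>' / 16)" by simp
  finally show "let lam = exp (-1) + \<eta>; l = nat \<lfloor>1 / \<eta>'\<rfloor> in
      cond_prob (Wn n)
        (\<lambda>w. \<exists>k::nat. 1 \<le> k \<and> real k \<le> real m / (2 * real l) \<and> LambdaK vs m l w k > lam + sqrt \<eta>')
        (\<lambda>w. avgW vs m w \<le> lam)
      \<le> 2 * real n * exp (- \<delta> * real n * \<eta>' / 16)"
    by (simp only: Let_def cond_prob_def lam_def[symmetric] l_def[symmetric])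
qed simp

end
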